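(* There is an algorithm which, given a random forest $F=\{T_1,\dots,T_m\}$ on $X_n$ and an instance $\vec x\in\{0,1\}^n$, computes a majoritary reason for $\vec x$ given $F$ in $O(n\,|F|)$ time.
   Context: A (Boolean) decision tree on $X_n=\{x_1,\dots,x_n\}$ is a binary tree whose internal nodes are labeled by variables of $X_n$ (each variable occurring at most once on any root-to-leaf path) and whose leaves are labeled $0$ or $1$; its value $T(\vec x)$ is the label of the leaf reached by going left (resp. right) at a node labeled $x_i$ when $x_i=0$ (resp. $1$). $\neg T$ is $T$ with leaf labels $0,1$ swapped. A random forest $F=\{T_1,\dots,T_m\}$ has value $F(\vec x)=1$ iff $\frac1m\sum_i T_i(\vec x)>\frac12$, and size $|F|=\sum_i|T_i|$ (number of nodes). A term is a conjunction (set) of literals; $t$ covers $\vec x$ if every literal of $t$ is true under $\vec x$; an implicant of a Boolean function $f$ is a term $t$ with $f(\vec z)=1$ for all $\vec z$ covered by $t$. A majoritary reason for $\vec x$ given $F$ is a term $t$ covering $\vec x$ that is an implicant of at least $\lfloor m/2\rfloor+1$ trees $T_i$ if $F(\vec x)=1$ (resp. of at least $\lfloor m/2\rfloor+1$ trees $\neg T_i$ if $F(\vec x)=0$), and such that for every literal $l\in t$, $t\setminus\{l\}$ does not satisfy this condition. *)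

theory Defs
  imports Main "HOL-Library.Time_Functions"
begin

text \<open>Variables x_1..x_n are represented by indices 0..n-1; an instance is a
bool list of length n (True = 1). Node i l r: go to l if x_i = 0, to r if x_i = 1.\<close>

datatype dtree = Leaf bool | Node nat dtree dtree

fun eval :: "dtree \<Rightarrow> bool list \<Rightarrow> bool" where
  "eval (Leaf c) z = c"
| "eval (Node i l r) z = (if z ! i then eval r z else eval l z)"

fun tsize :: "dtree \<Rightarrow> nat" where
  "tsize (Leaf c) = 1"
| "tsize (Node i l r) = 1 + tsize l + tsize r"

fun neg :: "dtree \<Rightarrow> dtree" where
  "neg (Leaf c) = Leaf (\<not> c)"
| "neg (Node i l r) = Node i (neg l) (neg r)"

text \<open>well-formedness over X_n: labels among x_1..x_n (indices < n), and no
variable repeated on a root-to-leaf path (V = variables already on the path)\<close>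
fun wf_tree :: "nat \<Rightarrow> nat set \<Rightarrow> dtree \<Rightarrow> bool" where
  "wf_tree n V (Leaf c) = True"
| "wf_tree n V (Node i l r) =
     (i < n \<and> i \<notin> V \<and> wf_tree n (insert i V) l \<and> wf_tree n (insert i V) r)"

type_synonym forest = "dtree list"

definition forest_val :: "forest \<Rightarrow> bool list \<Rightarrow> bool" where
  "forest_val F z \<longleftrightarrow> 2 * length (filter (\<lambda>T. eval T z) F) > length F"

definition fsize :: "forest \<Rightarrow> nat" where
  "fsize F = sum_list (map tsize F)"

text \<open>A literal (i, b) stands for x_i if b and for the negation of x_i otherwise.\<close>
type_synonym literal = "nat \<times> bool"

definition covers :: "literal set \<Rightarrow> bool list \<Rightarrow> bool" where
  "covers t z \<longleftrightarrow> (\<forall>(i, b) \<in> t. i < length z \<and> z ! i = b)"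

definition implicant :: "nat \<Rightarrow> literal set \<Rightarrow> dtree \<Rightarrow> bool" where
  "implicant n t T \<longleftrightarrow> (\<forall>z. length z = n \<longrightarrow> covers t z \<longrightarrow> eval T z)"

definition maj_cond :: "nat \<Rightarrow> forest \<Rightarrow> bool list \<Rightarrow> literal set \<Rightarrow> bool" where
  "maj_cond n F x t \<longleftrightarrow>
     (if forest_val F x
      then length (filter (\<lambda>T. implicant n t T) F) \<ge> length F div 2 + 1
      else length (filter (\<lambda>T. implicant n t (neg T)) F) \<ge> length F div 2 + 1)"

definition majoritary_reason :: "nat \<Rightarrow> forest \<Rightarrow> bool list \<Rightarrow> literal set \<Rightarrow> bool" where
  "majoritary_reason n F x t \<longleftrightarrow>
     covers t x \<and> maj_cond n F x t \<and> (\<forall>l \<in> t. \<not> maj_cond n F x (t - {l}))"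

text \<open>Annotated trees: variable, value of that variable in x, and a flag telling
whether the literal on that variable is in the current term.\<close>
datatype atree = ALeaf bool | ANode nat bool bool atree atree

fun annotate :: "bool list \<Rightarrow> dtree \<Rightarrow> atree" where
  "annotate x (Leaf c) = ALeaf c"
| "annotate x (Node i l r) = ANode i (nth x i) True (annotate x l) (annotate x r)"

fun annotate_all :: "bool list \<Rightarrow> dtree list \<Rightarrow> atree list" where
  "annotate_all x [] = []"
| "annotate_all x (T # Ts) = annotate x T # annotate_all x Ts"

fun aeval :: "atree \<Rightarrow> bool" where
  "aeval (ALeaf c) = c"
| "aeval (ANode i v f l r) = (if v then aeval r else aeval l)"

fun count_true :: "atree list \<Rightarrow> nat" where
  "count_true [] = 0"
| "count_true (T # Ts) = (if aeval T then 1 else 0) + count_true Ts"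

fun unflag :: "nat \<Rightarrow> atree \<Rightarrow> atree" where
  "unflag j (ALeaf c) = ALeaf c"
| "unflag j (ANode i v f l r) = ANode i v (f \<and> i \<noteq> j) (unflag j l) (unflag j r)"

fun unflag_all :: "nat \<Rightarrow> atree list \<Rightarrow> atree list" where
  "unflag_all j [] = []"
| "unflag_all j (T # Ts) = unflag j T # unflag_all j Ts"

text \<open>is the current term an implicant of the tree (b = True) / of its negation (b = False)\<close>
fun aimp :: "bool \<Rightarrow> atree \<Rightarrow> bool" where
  "aimp b (ALeaf c) = (c = b)"
| "aimp b (ANode i v f l r) =
     (if f then (if v then aimp b r else aimp b l) else (aimp b l \<and> aimp b r))"

fun count_imp :: "bool \<Rightarrow> atree list \<Rightarrow> nat" where
  "count_imp b [] = 0"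
| "count_imp b (T # Ts) = (if aimp b T then 1 else 0) + count_imp b Ts"

fun greedy :: "bool \<Rightarrow> nat \<Rightarrow> nat \<Rightarrow> bool list \<Rightarrow> atree list \<Rightarrow> literal list \<Rightarrow> literal list" where
  "greedy b k j [] ts acc = acc"
| "greedy b k j (v # vs) ts acc =
     (let ts' = unflag_all j ts in
      if k \<le> count_imp b ts' then greedy b k (Suc j) vs ts' acc
      else greedy b k (Suc j) vs ts ((j, v) # acc))"

definition mreason :: "forest \<Rightarrow> bool list \<Rightarrow> literal list" where
  "mreason F x =
     (let ts = annotate_all x F;
          m = length F;
          b = (m < 2 * count_true ts);
          k = m div 2 + 1
      in greedy b k 0 x ts [])"

text \<open>Step-counting running-time functions T_f for the algorithm, written out by hand
following exactly the translation scheme of HOL-Library.Time_Commands: every call of a user-defined function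
costs 1 plus the cost of the calls in its body; constructors and the predefined
operations (+, div, <, =, not, and, ...) cost 0; list indexing costs T_nth and length
costs T_length, both from HOL-Library.Time_Functions.\<close>

fun T_annotate :: "bool list \<Rightarrow> dtree \<Rightarrow> nat" where
  "T_annotate x (Leaf c) = 1"
| "T_annotate x (Node i l r) = T_nth x i + T_annotate x l + T_annotate x r + 1"

fun T_annotate_all :: "bool list \<Rightarrow> dtree list \<Rightarrow> nat" where
  "T_annotate_all x [] = 1"
| "T_annotate_all x (T # Ts) = T_annotate x T + T_annotate_all x Ts + 1"

fun T_aeval :: "atree \<Rightarrow> nat" where
  "T_aeval (ALeaf c) = 1"
| "T_aeval (ANode i v f l r) = (if v then T_aeval r else T_aeval l) + 1"

fun T_count_true :: "atree list \<Rightarrow> nat" where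
  "T_count_true [] = 1"
| "T_count_true (T # Ts) = T_aeval T + T_count_true Ts + 1"

fun T_unflag :: "nat \<Rightarrow> atree \<Rightarrow> nat" where
  "T_unflag j (ALeaf c) = 1"
| "T_unflag j (ANode i v f l r) = T_unflag j l + T_unflag j r + 1"

fun T_unflag_all :: "nat \<Rightarrow> atree list \<Rightarrow> nat" where
  "T_unflag_all j [] = 1"
| "T_unflag_all j (T # Ts) = T_unflag j T + T_unflag_all j Ts + 1"

fun T_aimp :: "bool \<Rightarrow> atree \<Rightarrow> nat" where
  "T_aimp b (ALeaf c) = 1"
| "T_aimp b (ANode i v f l r) =
     (if f then (if v then T_aimp b r else T_aimp b l) else T_aimp b l + T_aimp b r) + 1"

fun T_count_imp :: "bool \<Rightarrow> atree list \<Rightarrow> nat" where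
  "T_count_imp b [] = 1"
| "T_count_imp b (T # Ts) = T_aimp b T + T_count_imp b Ts + 1"

fun T_greedy :: "bool \<Rightarrow> nat \<Rightarrow> nat \<Rightarrow> bool list \<Rightarrow> atree list \<Rightarrow> literal list \<Rightarrow> nat" where
  "T_greedy b k j [] ts acc = 1"
| "T_greedy b k j (v # vs) ts acc =
     (let ts' = unflag_all j ts in
      T_unflag_all j ts + T_count_imp b ts' +
      (if k \<le> count_imp b ts' then T_greedy b k (Suc j) vs ts' acc
       else T_greedy b k (Suc j) vs ts ((j, v) # acc))) + 1"

definition T_mreason :: "forest \<Rightarrow> bool list \<Rightarrow> nat" where
  "T_mreason F x =
     (let ts = annotate_all x F;
          m = length F;
          b = (m < 2 * count_true ts);
          k = m div 2 + 1
      in T_annotate_all x F + T_length F + T_count_true ts + T_greedy b k 0 x ts []) + 1"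

end

theory Submission
  imports Defs
begin

text \<open>
  The algorithm is greedy deletion: start from the term of all literals of \<open>x\<close> and, for
  each variable in turn, drop its literal if the majority condition survives. The condition
  is upward closed in the term, so a literal that could not be dropped when it was examined
  cannot be dropped from any later, smaller term either, and the final term is minimal.
  The hypothesis that some majoritary reason exists guarantees that the full term satisfies
  the condition (it fails on a tie between the trees).

  Whether a term implies a well-formed tree (or its negation) is decided in one pass over an
  annotated tree: at a node whose variable is fixed by the term follow \<open>x\<close>, otherwise both
  subtrees must be implied; this is sound because the variable does not occur below that
  node. Hence each of the \<open>n\<close> deletion steps costs \<open>O(|F|)\<close>, and annotating costs
  \<open>O(n |F|)\<close> since list indexing is linear.
\<close>

section \<open>Annotated trees as terms\<close>

fun annotate_with :: "bool list \<Rightarrow> nat set \<Rightarrow> dtree \<Rightarrow> atree" where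
  "annotate_with x S (Leaf c) = ALeaf c"
| "annotate_with x S (Node i l r) =
     ANode i (x ! i) (i \<in> S) (annotate_with x S l) (annotate_with x S r)"

lemma annotate_eq_annotate_with: "annotate x T = annotate_with x UNIV T"
  by (induction T) auto

lemma annotate_all_eq_map: "annotate_all x F = map (annotate_with x UNIV) F"
  by (induction F) (auto simp: annotate_eq_annotate_with)

lemma unflag_annotate_with: "unflag j (annotate_with x S T) = annotate_with x (S - {j}) T"
  by (induction T) auto

lemma unflag_all_eq_map: "unflag_all j ts = map (unflag j) ts"
  by (induction ts) auto

lemma count_imp_eq_length_filter: "count_imp b ts = length (filter (aimp b) ts)"
  by (induction ts) auto

lemma count_true_eq_length_filter: "count_true ts = length (filter aeval ts)"
  by (induction ts) auto

lemma aeval_annotate_with: "aeval (annotate_with x S T) = eval T x"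
  by (induction T) auto

definition term_on :: "bool list \<Rightarrow> nat set \<Rightarrow> literal set" where
  "term_on x S = {(i, x ! i) | i. i \<in> S \<and> i < length x}"

lemma term_on_mono: "S \<subseteq> S' \<Longrightarrow> term_on x S \<subseteq> term_on x S'"
  unfolding term_on_def by auto

lemma covers_term_on: "covers (term_on x S) x"
  unfolding covers_def term_on_def by auto

lemma term_on_Un_atLeast_length: "term_on x (S \<union> {length x..}) = term_on x S"
  unfolding term_on_def by auto

lemma term_on_Diff: "term_on x (S - {i}) = term_on x S - {(i, x ! i)}"
  unfolding term_on_def by auto

lemma term_on_insert: "i < length x \<Longrightarrow> term_on x (insert i S) = insert (i, x ! i) (term_on x S)"
  unfolding term_on_def by auto

section \<open>Terms forcing the value of a tree\<close>

definition forces :: "nat \<Rightarrow> bool \<Rightarrow> literal set \<Rightarrow> dtree \<Rightarrow> bool" where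
  "forces n b t T \<longleftrightarrow> (\<forall>z. length z = n \<longrightarrow> covers t z \<longrightarrow> eval T z = b)"

lemma eval_neg: "eval (neg T) z = (\<not> eval T z)"
  by (induction T) auto

lemma forces_iff_implicant: "forces n b t T \<longleftrightarrow> implicant n t (if b then T else neg T)"
  unfolding forces_def implicant_def by (auto simp: eval_neg)

lemma covers_subset: "covers t' z \<Longrightarrow> t \<subseteq> t' \<Longrightarrow> covers t z"
  unfolding covers_def by auto

lemma forces_mono: "t \<subseteq> t' \<Longrightarrow> forces n b t T \<Longrightarrow> forces n b t' T"
  unfolding forces_def using covers_subset by blast

lemma eval_list_update_bound: "wf_tree n V T \<Longrightarrow> i \<in> V \<Longrightarrow> eval T (z[i := c]) = eval T z"
proof (induction T arbitrary: V)
  case (Node j l r)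
  then have "j \<noteq> i"
    by auto
  with Node show ?case
    by auto
qed simp

lemma covers_list_update:
  assumes "covers t z" "i \<notin> fst ` t"
  shows "covers t (z[i := c])"
proof -
  have "a < length (z[i := c]) \<and> z[i := c] ! a = v" if "(a, v) \<in> t" for a v
  proof -
    have "a \<noteq> i"
      using assms(2) that by (metis fst_conv image_eqI)
    moreover have "a < length z \<and> z ! a = v"
      using assms(1) that unfolding covers_def by auto
    ultimately show ?thesis
      by simp
  qed
  then show ?thesis
    unfolding covers_def by auto
qed

lemma forces_Node_fixed:
  "(i, c) \<in> t \<Longrightarrow> forces n b t (Node i l r) \<longleftrightarrow> forces n b t (if c then r else l)"
  unfolding forces_def covers_def by auto

lemma forces_Node_free:
  assumes "i < n" "i \<notin> fst ` t"
    and wf_l: "wf_tree n (insert i V) l" and wf_r: "wf_tree n (insert i V) r"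
  shows "forces n b t (Node i l r) \<longleftrightarrow> forces n b t l \<and> forces n b t r"
proof
  assume forces_Node: "forces n b t (Node i l r)"
  have "eval (if c then r else l) z = b" if z: "length z = n" "covers t z" for c z
  proof -
    have "eval (Node i l r) (z[i := c]) = b"
      using forces_Node z covers_list_update[OF z(2) \<open>i \<notin> fst ` t\<close>] unfolding forces_def by simp
    then have "eval (if c then r else l) (z[i := c]) = b"
      using \<open>i < n\<close> z(1) by (cases c) simp_all
    moreover have "eval (if c then r else l) (z[i := c]) = eval (if c then r else l) z"
      using eval_list_update_bound wf_l wf_r by simp
    ultimately show ?thesis
      by simp
  qed
  from this[where c = True] this[where c = False] show "forces n b t l \<and> forces n b t r"
    unfolding forces_def by simp
qed (auto simp: forces_def)

lemma aimp_annotate_with: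
  "wf_tree n V T \<Longrightarrow> length x = n \<Longrightarrow> aimp b (annotate_with x S T) \<longleftrightarrow> forces n b (term_on x S) T"
proof (induction T arbitrary: V)
  case (Leaf c)
  then show ?case
    using covers_term_on[of x S] unfolding forces_def by auto
next
  case (Node i l r)
  then have "i < n" and wf: "wf_tree n (insert i V) l" "wf_tree n (insert i V) r"
    by auto
  show ?case
  proof (cases "i \<in> S")
    case True
    then have "(i, x ! i) \<in> term_on x S"
      using \<open>i < n\<close> Node.prems(2) unfolding term_on_def by auto
    then show ?thesis
      using True Node.IH(1)[OF wf(1) Node.prems(2)] Node.IH(2)[OF wf(2) Node.prems(2)]
      by (simp add: forces_Node_fixed)
  next
    case False
    then have "i \<notin> fst ` term_on x S"
      unfolding term_on_def by auto
    then show ?thesis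
      using False Node.IH(1)[OF wf(1) Node.prems(2)] Node.IH(2)[OF wf(2) Node.prems(2)]
      by (simp add: forces_Node_free[OF \<open>i < n\<close> _ wf])
  qed
qed

lemma count_imp_annotate_with:
  assumes "\<forall>T \<in> set F. wf_tree n {} T" "length x = n"
  shows "count_imp b (map (annotate_with x S) F) = length (filter (forces n b (term_on x S)) F)"
proof -
  have "filter (aimp b \<circ> annotate_with x S) F = filter (forces n b (term_on x S)) F"
    using assms aimp_annotate_with by (intro filter_cong) auto
  then show ?thesis
    by (simp add: count_imp_eq_length_filter filter_map)
qed

lemma length_filter_mono:
  "(\<And>y. y \<in> set xs \<Longrightarrow> P y \<Longrightarrow> Q y) \<Longrightarrow> length (filter P xs) \<le> length (filter Q xs)"
  by (induction xs) auto

lemma maj_cond_iff_count_forces: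
  "maj_cond n F x t \<longleftrightarrow> length F div 2 + 1 \<le> length (filter (forces n (forest_val F x) t) F)"
  unfolding maj_cond_def forces_iff_implicant by auto

lemma maj_cond_mono: "t \<subseteq> t' \<Longrightarrow> maj_cond n F x t \<Longrightarrow> maj_cond n F x t'"
  using length_filter_mono[of F "forces n (forest_val F x) t" "forces n (forest_val F x) t'"]
    forces_mono[of t t'] maj_cond_iff_count_forces le_trans by meson

section \<open>Correctness of greedy deletion\<close>

definition irredundant :: "(nat set \<Rightarrow> bool) \<Rightarrow> nat set \<Rightarrow> nat set \<Rightarrow> bool" where
  "irredundant G A R \<longleftrightarrow> G (A \<union> R) \<and> (\<forall>i \<in> A. \<not> G (A \<union> R - {i}))"

text \<open>
  Loop invariant of \<open>greedy\<close> at index \<open>j\<close>: the flagged variables are \<open>A \<union> {j..}\<close>,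
  where \<open>A\<close> are the variables kept so far and \<open>{j..}\<close> those not yet examined.
\<close>

lemma greedy_irredundant:
  assumes mono: "\<And>S S'. S \<subseteq> S' \<Longrightarrow> G S \<Longrightarrow> G S'"
    and G_count: "\<And>S. G S \<longleftrightarrow> k \<le> count_imp b (map (annotate_with x S) F)"
  shows "vs = drop j x \<Longrightarrow> j \<le> length x \<Longrightarrow> A \<subseteq> {..<j} \<Longrightarrow> set acc = term_on x A \<Longrightarrow>
    irredundant G A {j..} \<Longrightarrow>
    \<exists>A'. set (greedy b k j vs (map (annotate_with x (A \<union> {j..})) F) acc) = term_on x A'
      \<and> irredundant G A' {length x..}"
proof (induction vs arbitrary: j acc A)
  case Nil
  then show ?case
    by auto
next
  case (Cons v vs)
  have "j < length x"
    using Cons.prems(1,2) by (metis drop_all list.distinct(1) not_le)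
  then have v: "v = x ! j" and vs: "vs = drop (Suc j) x"
    using Cons.prems(1) Cons_nth_drop_Suc by (metis list.inject)+
  have drop_j: "A \<union> {j..} - {j} = A \<union> {Suc j..}"
    using Cons.prems(3) by auto
  have unflag: "unflag_all j (map (annotate_with x (A \<union> {j..})) F)
      = map (annotate_with x (A \<union> {Suc j..})) F"
    by (simp add: unflag_all_eq_map comp_def unflag_annotate_with drop_j)
  show ?case
  proof (cases "G (A \<union> {Suc j..})")
    case True
    have "A \<union> {Suc j..} - {i} \<subseteq> A \<union> {j..} - {i}" for i
      by auto
    then have "irredundant G A {Suc j..}"
      using Cons.prems(5) True mono unfolding irredundant_def by blast
    moreover have "A \<subseteq> {..<Suc j}"
      using Cons.prems(3) by auto
    ultimately show ?thesis
      using True Cons.IH[OF vs _ _ Cons.prems(4)] \<open>j < length x\<close>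
      by (simp add: Let_def unflag G_count[symmetric])
  next
    case False
    have A_j: "insert j (A \<union> {Suc j..}) = A \<union> {j..}"
      by auto
    have "irredundant G (insert j A) {Suc j..}"
      using Cons.prems(5) False A_j drop_j unfolding irredundant_def by auto
    moreover have "insert j A \<subseteq> {..<Suc j}"
      using Cons.prems(3) by auto
    moreover have "set ((j, v) # acc) = term_on x (insert j A)"
      using Cons.prems(4) v \<open>j < length x\<close> by (simp add: term_on_insert)
    ultimately show ?thesis
      using False Cons.IH[OF vs, of "insert j A" "(j, v) # acc"] \<open>j < length x\<close>
      by (simp add: Let_def unflag G_count[symmetric] A_j)
  qed
qed

lemma mreason_eq_greedy:
  "mreason F x =
     greedy (forest_val F x) (length F div 2 + 1) 0 x (map (annotate_with x ({} \<union> {0..})) F) []"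
proof -
  have "count_true (annotate_all x F) = length (filter (\<lambda>T. eval T x) F)"
    by (simp add: annotate_all_eq_map count_true_eq_length_filter filter_map o_def aeval_annotate_with)
  then show ?thesis
    unfolding mreason_def Let_def forest_val_def by (simp add: annotate_all_eq_map atLeast_0)
qed

lemma mreason_majoritary_reason:
  assumes len: "length x = n" and wf: "\<forall>T \<in> set F. wf_tree n {} T"
    and ex: "\<exists>t. majoritary_reason n F x t"
  shows "majoritary_reason n F x (set (mreason F x))"
proof -
  define G where "G S \<longleftrightarrow> maj_cond n F x (term_on x S)" for S
  have G_count: "G S \<longleftrightarrow> length F div 2 + 1 \<le> count_imp (forest_val F x) (map (annotate_with x S) F)" for S
    unfolding G_def maj_cond_iff_count_forces count_imp_annotate_with[OF wf len] ..
  have mono: "G S'" if "S \<subseteq> S'" "G S" for S S'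
    using that maj_cond_mono term_on_mono unfolding G_def by metis
  obtain t where t: "majoritary_reason n F x t"
    using ex by blast
  have "t \<subseteq> term_on x UNIV"
    using t len unfolding majoritary_reason_def covers_def term_on_def by auto
  then have "maj_cond n F x (term_on x UNIV)"
    using t maj_cond_mono unfolding majoritary_reason_def by blast
  then have "irredundant G {} {0..}"
    unfolding irredundant_def G_def by (simp add: atLeast_0)
  then have "\<exists>A. set (mreason F x) = term_on x A \<and> irredundant G A {length x..}"
    unfolding mreason_eq_greedy
    by (intro greedy_irredundant[OF mono G_count]) (auto simp: term_on_def)
  then obtain A where A: "set (mreason F x) = term_on x A" "irredundant G A {length x..}"
    by blast
  show ?thesis
    unfolding majoritary_reason_def
  proof (intro conjI ballI)
    show "covers (set (mreason F x)) x"
      using A(1) covers_term_on by simp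
    show "maj_cond n F x (set (mreason F x))"
      using A unfolding irredundant_def G_def by (simp add: term_on_Un_atLeast_length)
    fix l assume "l \<in> set (mreason F x)"
    then obtain i where "i \<in> A" "l = (i, x ! i)"
      using A(1) unfolding term_on_def by auto
    then have "set (mreason F x) - {l} = term_on x (A \<union> {length x..} - {i})"
      using A(1) by (simp add: term_on_Diff term_on_Un_atLeast_length)
    then show "\<not> maj_cond n F x (set (mreason F x) - {l})"
      using A(2) \<open>i \<in> A\<close> unfolding irredundant_def G_def by auto
  qed
qed

section \<open>Running time\<close>

fun asize :: "atree \<Rightarrow> nat" where
  "asize (ALeaf c) = 1"
| "asize (ANode i v f l r) = 1 + asize l + asize r"

lemma T_unflag_eq_asize: "T_unflag j a = asize a"
  by (induction a) auto

lemma asize_unflag: "asize (unflag j a) = asize a"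
  by (induction a) auto

lemma T_aimp_le_asize: "T_aimp b a \<le> asize a"
  by (induction a) auto

lemma T_aeval_le_asize: "T_aeval a \<le> asize a"
  by (induction a) auto

lemma asize_annotate_with: "asize (annotate_with x S T) = tsize T"
  by (induction T) auto

definition traversal_cost :: "atree list \<Rightarrow> nat" where
  "traversal_cost ts = sum_list (map asize ts) + length ts + 1"

lemma T_unflag_all_eq_traversal_cost: "T_unflag_all j ts = traversal_cost ts"
  unfolding traversal_cost_def by (induction ts) (auto simp: T_unflag_eq_asize)

lemma traversal_cost_unflag_all: "traversal_cost (unflag_all j ts) = traversal_cost ts"
  unfolding traversal_cost_def by (induction ts) (auto simp: asize_unflag)

lemma T_count_imp_le_traversal_cost: "T_count_imp b ts \<le> traversal_cost ts"
  unfolding traversal_cost_def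
proof (induction ts)
  case (Cons a ts)
  then show ?case
    using T_aimp_le_asize[of b a] by simp
qed simp

lemma T_count_true_le_traversal_cost: "T_count_true ts \<le> traversal_cost ts"
  unfolding traversal_cost_def
proof (induction ts)
  case (Cons a ts)
  then show ?case
    using T_aeval_le_asize[of a] by simp
qed simp

lemma traversal_cost_annotate_all: "traversal_cost (annotate_all x F) = fsize F + length F + 1"
  unfolding traversal_cost_def fsize_def annotate_all_eq_map by (simp add: o_def asize_annotate_with)

lemma T_greedy_le: "T_greedy b k j vs ts acc \<le> (length vs + 1) * (3 * traversal_cost ts)"
proof (induction vs arbitrary: j ts acc)
  case Nil
  then show ?case
    by (simp add: traversal_cost_def)
next
  case (Cons v vs)
  let ?ts' = "unflag_all j ts"
  let ?rest = "if k \<le> count_imp b ?ts' then T_greedy b k (Suc j) vs ?ts' acc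
               else T_greedy b k (Suc j) vs ts ((j, v) # acc)"
  have rest: "?rest \<le> (length vs + 1) * (3 * traversal_cost ts)"
    using Cons.IH[of "Suc j" ?ts' acc] Cons.IH[of "Suc j" ts "(j, v) # acc"]
    by (simp add: traversal_cost_unflag_all)
  have "T_greedy b k j (v # vs) ts acc = traversal_cost ts + T_count_imp b ?ts' + ?rest + 1"
    by (simp add: Let_def T_unflag_all_eq_traversal_cost)
  also have "\<dots> \<le> traversal_cost ts + traversal_cost ts + (length vs + 1) * (3 * traversal_cost ts) + 1"
    using rest T_count_imp_le_traversal_cost[of b ?ts'] traversal_cost_unflag_all[of j ts] by linarith
  also have "\<dots> \<le> (length (v # vs) + 1) * (3 * traversal_cost ts)"
    by (simp add: traversal_cost_def)
  finally show ?case .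
qed

lemma T_annotate_le: "wf_tree n V T \<Longrightarrow> length x = n \<Longrightarrow> T_annotate x T \<le> (n + 1) * tsize T"
proof (induction T arbitrary: V)
  case (Node i l r)
  then have "T_nth x i \<le> n"
    by (simp add: T_nth)
  moreover have "T_annotate x l \<le> (n + 1) * tsize l" "T_annotate x r \<le> (n + 1) * tsize r"
    using Node by auto
  ultimately show ?case
    by (simp add: algebra_simps)
qed simp

lemma T_annotate_all_le:
  "\<forall>T \<in> set F. wf_tree n {} T \<Longrightarrow> length x = n \<Longrightarrow>
   T_annotate_all x F \<le> (n + 1) * fsize F + length F + 1"
  by (induction F) (auto simp: fsize_def algebra_simps dest: T_annotate_le intro!: add_mono)

lemma length_le_fsize: "length F \<le> fsize F"
  unfolding fsize_def
proof (induction F)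
  case (Cons T F)
  have "1 \<le> tsize T"
    by (cases T) auto
  with Cons show ?case
    by simp
qed simp

lemma T_mreason_le:
  assumes "length x = n" "F \<noteq> []" "\<forall>T \<in> set F. wf_tree n {} T"
  shows "T_mreason F x \<le> 20 * ((n + 1) * fsize F)"
proof -
  define s where "s = fsize F"
  define m where "m = length F"
  define P where "P = (n + 1) * s"
  have "m \<le> s" "1 \<le> m" "s \<le> P"
    using length_le_fsize \<open>F \<noteq> []\<close> unfolding m_def s_def P_def by (auto simp: Suc_le_eq)
  have cost: "traversal_cost (annotate_all x F) = s + m + 1"
    unfolding s_def m_def by (rule traversal_cost_annotate_all)
  have "3 * (s + m + 1) \<le> 9 * s"
    using \<open>m \<le> s\<close> \<open>1 \<le> m\<close> by presburger
  then have "(n + 1) * (3 * (s + m + 1)) \<le> (n + 1) * (9 * s)"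
    by (rule mult_le_mono2)
  then have greedy: "T_greedy b k 0 x (annotate_all x F) [] \<le> 9 * P" for b k
    using T_greedy_le[of b k 0 x "annotate_all x F" "[]"] cost \<open>length x = n\<close>
    unfolding P_def by simp
  have annotate: "T_annotate_all x F \<le> P + m + 1"
    using T_annotate_all_le[OF assms(3,1)] unfolding P_def s_def m_def .
  have count_true: "T_count_true (annotate_all x F) \<le> s + m + 1"
    using T_count_true_le_traversal_cost[of "annotate_all x F"] cost by simp
  have "T_mreason F x \<le> (P + m + 1) + (m + 1) + (s + m + 1) + 9 * P + 1"
    using annotate count_true greedy unfolding T_mreason_def Let_def T_length m_def
    by (meson add_le_mono le_refl)
  also have "\<dots> \<le> 20 * P"
    using \<open>m \<le> s\<close> \<open>1 \<le> m\<close> \<open>s \<le> P\<close> by linarith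
  finally show ?thesis
    unfolding P_def s_def .
qed

theorem mainTheorem7:
  shows "\<exists>c::nat. \<forall>n (F::forest) (x::bool list).
           length x = n \<and> F \<noteq> [] \<and> (\<forall>T \<in> set F. wf_tree n {} T)
           \<and> (\<exists>t. majoritary_reason n F x t)
           \<longrightarrow> majoritary_reason n F x (set (mreason F x))
             \<and> T_mreason F x \<le> c * ((n + 1) * fsize F)"
  using mreason_majoritary_reason T_mreason_le by blast

end
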